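(* Let $k\ge0$ and let $n$ be a positive integer of length $l$ with $k(n)\le k$. Then $$\sum_{\substack{m:\ \mathrm{ld}_l(m)=n\\ k(m)=k}}\frac1m=\sum_{m=0}^{\infty}\frac{v_{k-k(n);m}}{(n+1)^{m+1}},$$ and the right-hand side is a series of positive terms converging geometrically.
   Context: Fix $b\ge2$ and $d\in\{0,\dots,b-1\}$. For an integer $n\ge0$, its length $l(n)$ is the smallest $l\ge0$ with $n<b^l$, and $k(n)$ is the number of occurrences of $d$ in its base-$b$ representation without leading zeros. For $m>0$ of length $q\ge l$, $\mathrm{ld}_l(m)=\lfloor m/b^{q-l}\rfloor$. A string is a finite sequence $X=(d_l,\dots,d_1)$ of digits in $\{0,\dots,b-1\}$ (leading zeros allowed), of length $|X|=l\ge0$; its value is $n(X)=\sum_{i=1}^{l}d_ib^{i-1}$ ($0$ for the empty string). For $k\ge0$, $\mu_k=\sum_{X}b^{-|X|}\delta_{n(X)/b^{|X|}}$, the sum over all strings $X$ containing $d$ exactly $k$ times; it is a finite measure on $[0,1)$ of total mass $b$. The complementary moments are $v_{k;m}=\int_{[0,1)}(1-x)^m\,d\mu_k(x)$ (with $0^0=1$). *)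

theory Defs
  imports "HOL-Analysis.Analysis"
begin

definition len :: "nat \<Rightarrow> nat \<Rightarrow> nat" where
  "len b n = (LEAST l. n < b ^ l)"

definition digits :: "nat \<Rightarrow> nat \<Rightarrow> nat list" where
  "digits b n = map (\<lambda>i. n div b ^ i mod b) [0..<len b n]"

definition kcount :: "nat \<Rightarrow> nat \<Rightarrow> nat \<Rightarrow> nat" where
  "kcount b d n = length (filter (\<lambda>x. x = d) (digits b n))"

definition ld :: "nat \<Rightarrow> nat \<Rightarrow> nat \<Rightarrow> nat" where
  "ld b l m = m div b ^ (len b m - l)"

text \<open>A string (d_l, ..., d_1) is the list [d_l, ..., d_1] (most significant first).\<close>
definition strval :: "nat \<Rightarrow> nat list \<Rightarrow> nat" where
  "strval b X = (\<Sum>i<length X. X ! i * b ^ (length X - 1 - i))"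

definition strs :: "nat \<Rightarrow> nat \<Rightarrow> nat \<Rightarrow> nat list set" where
  "strs b d k = {X. (\<forall>x\<in>set X. x < b) \<and> length (filter (\<lambda>x. x = d) X) = k}"

definition mu :: "nat \<Rightarrow> nat \<Rightarrow> nat \<Rightarrow> real measure" where
  "mu b d k = measure_of UNIV (sets borel)
     (\<lambda>A. nn_integral (count_space (strs b d k)) (\<lambda>X.
        ennreal (1 / real b ^ length X) * indicator A (real (strval b X) / real b ^ length X)))"

definition v :: "nat \<Rightarrow> nat \<Rightarrow> nat \<Rightarrow> nat \<Rightarrow> real" where
  "v b d k m = set_lebesgue_integral (mu b d k) {0..<1} (\<lambda>x. (1 - x) ^ m)"

end

theory Submission
  imports Defs
begin

text \<open>Appending a string X of base-b digits to n gives m = n b^|X| + n(X), and this is a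
  bijection from the strings containing k - k(n) digits d onto the integers m in question.
  With y = n(X) / b^|X| one has 1/m = b^-|X| / (n + y) and 1/(n + y) = \<Sum>_i (1 - y)^i / (n + 1)^(i+1).
  All terms are nonnegative, so the double sum may be summed the other way round, and summing
  over X first produces the moments v. They are positive (the string d...d contributes) and
  bounded by the total mass of \<mu>, which is at most b.\<close>

fun low_digits :: "nat \<Rightarrow> nat \<Rightarrow> nat \<Rightarrow> nat list" where
  "low_digits b 0 x = []"
| "low_digits b (Suc L) x = x mod b # low_digits b L (x div b)"

lemma length_low_digits [simp]: "length (low_digits b L x) = L"
  by (induction L arbitrary: x) auto

lemma low_digits_less: "0 < b \<Longrightarrow> c \<in> set (low_digits b L x) \<Longrightarrow> c < b"
  by (induction L arbitrary: x) auto

lemma nth_low_digits: "i < L \<Longrightarrow> low_digits b L x ! i = x div b ^ i mod b"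
  by (induction L arbitrary: x i) (auto simp: nth_Cons' div_mult2_eq less_Suc_eq_0_disj)

lemma digits_eq_low_digits: "digits b m = low_digits b (len b m) m"
  unfolding digits_def by (rule nth_equalityI) (auto simp: nth_low_digits)

lemma low_digits_add: "low_digits b (L + K) x = low_digits b L x @ low_digits b K (x div b ^ L)"
  by (induction L arbitrary: x) (auto simp: div_mult2_eq)

lemma strval_Nil [simp]: "strval b [] = 0"
  by (simp add: strval_def)

lemma strval_snoc: "strval b (X @ [c]) = b * strval b X + c"
proof -
  have "strval b (X @ [c]) = (\<Sum>i<length X. X ! i * b ^ (length X - i)) + c"
    unfolding strval_def by (simp add: nth_append)
  also have "(\<Sum>i<length X. X ! i * b ^ (length X - i)) = b * strval b X"
    unfolding strval_def sum_distrib_left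
    by (rule sum.cong) (auto simp: Suc_diff_Suc mult_ac simp flip: power_Suc)
  finally show ?thesis .
qed

lemma strval_rev_low_digits: "strval b (rev (low_digits b L x)) = x mod b ^ L"
  by (induction L arbitrary: x) (auto simp: strval_snoc mod_mult2_eq mult_ac)

lemma low_digits_strval:
  "\<forall>c\<in>set X. c < b \<Longrightarrow> low_digits b (length X) (strval b X) = rev X"
  by (induction X rule: rev_induct) (auto simp: strval_snoc)

lemma strval_less: "\<forall>c\<in>set X. c < b \<Longrightarrow> strval b X < b ^ length X"
proof (induction X rule: rev_induct)
  case (snoc c X)
  then have IH: "strval b X + 1 \<le> b ^ length X" and "c < b" by auto
  then have "b * strval b X + c < b * (strval b X + 1)" by simp
  also have "\<dots> \<le> b * b ^ length X" using IH by (rule mult_left_mono) simp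
  finally show ?case by (simp add: strval_snoc)
qed simp

lemma low_digits_mod: "0 < b \<Longrightarrow> low_digits b L (x mod b ^ L) = low_digits b L x"
  using low_digits_strval[of "rev (low_digits b L x)" b]
  by (simp add: strval_rev_low_digits low_digits_less)

lemma concat_div_mod:
  fixes n b L s :: nat
  assumes "s < b ^ L"
  shows "(n * b ^ L + s) div b ^ L = n" and "(n * b ^ L + s) mod b ^ L = s"
proof -
  have "b ^ L \<noteq> 0" using assms by (metis not_less_zero)
  then show "(n * b ^ L + s) div b ^ L = n" and "(n * b ^ L + s) mod b ^ L = s"
    using assms by (simp_all add: add.commute[of "n * b ^ L"])
qed

lemma len_le_iff:
  assumes "2 \<le> b"
  shows "len b x \<le> l \<longleftrightarrow> x < b ^ l"
proof -
  have "x < 2 ^ x" by (rule less_exp)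
  also have "\<dots> \<le> b ^ x" using assms by (simp add: power_mono)
  finally have "x < b ^ len b x" unfolding len_def by (rule LeastI)
  moreover have "b ^ len b x \<le> b ^ l" if "len b x \<le> l"
    using assms that by (simp add: power_increasing)
  ultimately show ?thesis
    unfolding len_def by (auto intro: Least_le order.strict_trans2)
qed

lemma len_concat:
  assumes b: "2 \<le> b" and n: "0 < n" and s: "s < b ^ L"
  shows "len b (n * b ^ L + s) = len b n + L"
proof -
  have "n * b ^ L + s < b ^ l \<longleftrightarrow> len b n + L \<le> l" for l
  proof (cases "L \<le> l")
    case True
    have "n * b ^ L + s < b ^ l \<longleftrightarrow> n * b ^ L + s < b ^ (l - L) * b ^ L"
      using True by (simp flip: power_add)
    also have "\<dots> \<longleftrightarrow> (n * b ^ L + s) div b ^ L < b ^ (l - L)"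
      by (rule div_less_iff_less_mult[symmetric]) (use b in simp)
    also have "\<dots> \<longleftrightarrow> n < b ^ (l - L)" by (simp only: concat_div_mod(1)[OF s])
    also have "\<dots> \<longleftrightarrow> len b n + L \<le> l"
      using True len_le_iff[OF b, of n "l - L"] by auto
    finally show ?thesis .
  next
    case False
    then have "b ^ l \<le> b ^ L" using b by (simp add: power_increasing)
    also have "\<dots> \<le> n * b ^ L" using n by simp
    finally have "b ^ l \<le> n * b ^ L" .
    with False show ?thesis by auto
  qed
  then show ?thesis
    using len_le_iff[OF b, of "n * b ^ L + s"] by (meson le_antisym order_refl)
qed

lemma kcount_concat:
  assumes b: "2 \<le> b" and n: "0 < n" and s: "s < b ^ L"
  shows "kcount b d (n * b ^ L + s) = length (filter (\<lambda>x. x = d) (low_digits b L s)) + kcount b d n"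
proof -
  let ?m = "n * b ^ L + s"
  have "digits b ?m = low_digits b L ?m @ low_digits b (len b n) (?m div b ^ L)"
    unfolding digits_eq_low_digits len_concat[OF b n s] add.commute[of "len b n"] low_digits_add ..
  also have "low_digits b L ?m = low_digits b L s"
    using low_digits_mod[of b L ?m] b unfolding concat_div_mod(2)[OF s] by simp
  also have "?m div b ^ L = n" by (rule concat_div_mod(1)[OF s])
  finally show ?thesis by (simp add: kcount_def digits_eq_low_digits)
qed

definition append_digits :: "nat \<Rightarrow> nat \<Rightarrow> nat list \<Rightarrow> nat" where
  "append_digits b n X = n * b ^ length X + strval b X"

lemma
  assumes b: "2 \<le> b" and n: "0 < n" and X: "\<forall>c\<in>set X. c < b"
  shows len_append_digits: "len b (append_digits b n X) = len b n + length X"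
    and ld_append_digits: "ld b (len b n) (append_digits b n X) = n"
    and kcount_append_digits:
      "kcount b d (append_digits b n X) = length (filter (\<lambda>x. x = d) X) + kcount b d n"
proof -
  have s: "strval b X < b ^ length X" by (rule strval_less[OF X])
  show len: "len b (append_digits b n X) = len b n + length X"
    unfolding append_digits_def by (rule len_concat[OF b n s])
  show "ld b (len b n) (append_digits b n X) = n"
    unfolding ld_def len using concat_div_mod(1)[OF s] by (simp add: append_digits_def)
  show "kcount b d (append_digits b n X) = length (filter (\<lambda>x. x = d) X) + kcount b d n"
    using kcount_concat[OF b n s, of d] low_digits_strval[OF X]
    by (simp add: append_digits_def rev_filter[symmetric])
qed

lemma inj_on_append_digits: "2 \<le> b \<Longrightarrow> 0 < n \<Longrightarrow> inj_on (append_digits b n) {X. \<forall>c\<in>set X. c < b}"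
proof (rule inj_onI, clarsimp)
  fix X Y assume b: "2 \<le> b" and n: "0 < n" and X: "\<forall>c\<in>set X. c < b" and Y: "\<forall>c\<in>set Y. c < b"
    and eq: "append_digits b n X = append_digits b n Y"
  then have "length X = length Y"
    using len_append_digits[OF b n X] len_append_digits[OF b n Y] by simp
  moreover from this eq have "strval b X = strval b Y"
    by (simp add: append_digits_def)
  ultimately have "rev X = rev Y"
    using low_digits_strval[OF X] low_digits_strval[OF Y] by metis
  then show "X = Y" by simp
qed

lemma append_digits_low_digits:
  assumes "ld b (len b n) m = n"
  shows "m = append_digits b n (rev (low_digits b (len b m - len b n) (m mod b ^ (len b m - len b n))))"
  using div_mult_mod_eq[of m "b ^ (len b m - len b n)"] assms
  by (simp add: append_digits_def ld_def strval_rev_low_digits)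

lemma bij_betw_append_digits:
  assumes b: "2 \<le> b" and n: "0 < n" and kn: "kcount b d n \<le> k"
  shows "bij_betw (append_digits b n) (strs b d (k - kcount b d n))
     {m. 0 < m \<and> len b n \<le> len b m \<and> ld b (len b n) m = n \<and> kcount b d m = k}"
proof (rule bij_betw_imageI)
  show "inj_on (append_digits b n) (strs b d (k - kcount b d n))"
    by (rule inj_on_subset[OF inj_on_append_digits[OF b n]]) (auto simp: strs_def)
  show "append_digits b n ` strs b d (k - kcount b d n) =
      {m. 0 < m \<and> len b n \<le> len b m \<and> ld b (len b n) m = n \<and> kcount b d m = k}"
  proof (intro equalityI subsetI)
    fix m assume "m \<in> append_digits b n ` strs b d (k - kcount b d n)"
    then obtain X where X: "X \<in> strs b d (k - kcount b d n)" and m: "m = append_digits b n X"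
      by blast
    then have digits: "\<forall>c\<in>set X. c < b" by (simp add: strs_def)
    show "m \<in> {m. 0 < m \<and> len b n \<le> len b m \<and> ld b (len b n) m = n \<and> kcount b d m = k}"
      using X kn n b len_append_digits[OF b n digits] ld_append_digits[OF b n digits]
        kcount_append_digits[OF b n digits, of d]
      by (auto simp: m strs_def append_digits_def)
  next
    fix m
    assume "m \<in> {m. 0 < m \<and> len b n \<le> len b m \<and> ld b (len b n) m = n \<and> kcount b d m = k}"
    then have ld: "ld b (len b n) m = n" and k: "kcount b d m = k" by auto
    define X where "X = rev (low_digits b (len b m - len b n) (m mod b ^ (len b m - len b n)))"
    have m: "m = append_digits b n X"
      unfolding X_def by (rule append_digits_low_digits[OF ld])
    have digits: "\<forall>c\<in>set X. c < b" using b by (auto simp: X_def low_digits_less)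
    then have "X \<in> strs b d (k - kcount b d n)"
      using kcount_append_digits[OF b n digits, of d] k by (simp add: strs_def flip: m)
    then show "m \<in> append_digits b n ` strs b d (k - kcount b d n)" using m by blast
  qed
qed

definition strs_len :: "nat \<Rightarrow> nat \<Rightarrow> nat \<Rightarrow> nat \<Rightarrow> nat list set" where
  "strs_len b d k L = {X \<in> strs b d k. length X = L}"

lemma finite_strs_len: "finite (strs_len b d k L)"
  by (rule finite_subset[OF _ finite_lists_length_eq[of "{..<b}" L]])
     (auto simp: strs_len_def strs_def)

lemma strs_len_0: "strs_len b d k 0 = (if k = 0 then {[]} else {})"
  by (auto simp: strs_len_def strs_def)

lemma strs_len_Suc:
  assumes "d < b"
  shows "strs_len b d k (Suc L) = (if 0 < k then Cons d ` strs_len b d (k - 1) L else {})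
      \<union> (\<lambda>(c, X). c # X) ` (({..<b} - {d}) \<times> strs_len b d k L)"
  (is "?lhs = ?rhs")
proof (intro equalityI subsetI)
  fix Z assume "Z \<in> ?lhs"
  then obtain c X where "Z = c # X" "c # X \<in> ?lhs"
    by (cases Z) (auto simp: strs_len_def)
  then show "Z \<in> ?rhs"
    by (cases "c = d") (auto simp: strs_len_def strs_def image_iff)
qed (use assms in \<open>auto simp: strs_len_def strs_def split: if_splits\<close>)

lemma card_strs_len_Suc:
  assumes "d < b"
  shows "card (strs_len b d k (Suc L)) =
    (if 0 < k then card (strs_len b d (k - 1) L) else 0) + (b - 1) * card (strs_len b d k L)"
proof -
  have "inj_on (\<lambda>(c, X). c # X) (({..<b} - {d}) \<times> strs_len b d k L)"
    by (auto simp: inj_on_def)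
  then have "card ((\<lambda>(c, X). c # X) ` (({..<b} - {d}) \<times> strs_len b d k L))
      = (b - 1) * card (strs_len b d k L)"
    using assms by (simp add: card_image card_cartesian_product)
  moreover have "card (Cons d ` strs_len b d (k - 1) L) = card (strs_len b d (k - 1) L)"
    by (simp add: card_image)
  ultimately show ?thesis
    unfolding strs_len_Suc[OF assms]
    by (subst card_Un_disjoint) (auto simp: finite_strs_len)
qed

(* Peeling off the leading digit, the left-hand side m_k(M) satisfies
   m_k(M+1) = [k = 0] + m_(k-1)(M) / b + (b-1)/b * m_k(M), so m_k(M) <= b by induction on M. *)

lemma strs_len_mass_le:
  assumes b: "2 \<le> b" and d: "d < b"
  shows "(\<Sum>L\<le>M. real (card (strs_len b d k L)) / real b ^ L) \<le> real b"
proof (induction M arbitrary: k)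
  case 0
  show ?case using b by (simp add: strs_len_0)
next
  case (Suc M)
  define mass where "mass k = (\<Sum>L\<le>M. real (card (strs_len b d k L)) / real b ^ L)" for k
  have b_pos: "0 < real b" using b by simp
  have "real (card (strs_len b d k (Suc L))) / real b ^ Suc L =
     (if 0 < k then real (card (strs_len b d (k - 1) L)) / real b ^ L / real b else 0)
     + (real b - 1) / real b * (real (card (strs_len b d k L)) / real b ^ L)" for L
    using b by (simp add: card_strs_len_Suc[OF d] of_nat_diff add_divide_distrib)
  then have "(\<Sum>L\<le>Suc M. real (card (strs_len b d k L)) / real b ^ L) =
      real (card (strs_len b d k 0))
      + (if 0 < k then mass (k - 1) / real b else 0) + (real b - 1) / real b * mass k"
    unfolding sum.atMost_Suc_shift mass_def
    by (simp add: sum.distrib sum_distrib_left sum_divide_distrib)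
  also have "\<dots> \<le> (if k = 0 then 1 else 0) + (if 0 < k then 1 else 0) + (real b - 1)"
  proof -
    have "real (card (strs_len b d k 0)) = (if k = 0 then 1 else 0)"
      by (simp add: strs_len_0)
    moreover have "mass (k - 1) / real b \<le> 1"
      using Suc.IH[of "k - 1"] b_pos unfolding mass_def by (simp add: divide_le_eq)
    moreover have "(real b - 1) / real b * mass k \<le> (real b - 1) / real b * real b"
      using Suc.IH[of k] b unfolding mass_def by (intro mult_left_mono) auto
    ultimately show ?thesis using b_pos by (intro add_mono) auto
  qed
  also have "\<dots> = real b" by simp
  finally show ?case .
qed

definition strweight :: "nat \<Rightarrow> nat list \<Rightarrow> real" where
  "strweight b X = 1 / real b ^ length X"

lemma sum_strweight_le:
  assumes b: "2 \<le> b" and d: "d < b" and F: "finite F" "F \<subseteq> strs b d k"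
  shows "sum (strweight b) F \<le> real b"
proof -
  define M where "M = Max (length ` F)"
  have "F \<subseteq> (\<Union>L\<le>M. strs_len b d k L)"
    using F by (auto simp: M_def strs_len_def)
  then have "sum (strweight b) F \<le> sum (strweight b) (\<Union>L\<le>M. strs_len b d k L)"
    by (intro sum_mono2) (auto simp: finite_strs_len strweight_def)
  also have "\<dots> = (\<Sum>L\<le>M. sum (strweight b) (strs_len b d k L))"
    by (rule sum.UNION_disjoint) (simp_all add: finite_strs_len, auto simp: strs_len_def)
  also have "\<dots> = (\<Sum>L\<le>M. real (card (strs_len b d k L)) / real b ^ L)"
    by (rule sum.cong) (auto simp: strweight_def strs_len_def)
  also have "\<dots> \<le> real b" by (rule strs_len_mass_le[OF b d])
  finally show ?thesis .
qed

lemma strweight_summable: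
  assumes "2 \<le> b" and "d < b"
  shows "strweight b summable_on strs b d k"
  using sum_strweight_le[OF assms]
  by (intro nonneg_bdd_above_summable_on) (auto simp: strweight_def bdd_above_def)

lemma infsum_strweight_le:
  assumes "2 \<le> b" and "d < b"
  shows "infsum (strweight b) (strs b d k) \<le> real b"
  using sum_strweight_le[OF assms] by (intro infsum_le_finite_sums[OF strweight_summable[OF assms]]) auto

definition strpoint :: "nat \<Rightarrow> nat list \<Rightarrow> real" where
  "strpoint b X = real (strval b X) / real b ^ length X"

lemma strpoint_range:
  assumes "2 \<le> b" and "\<forall>c\<in>set X. c < b"
  shows "0 \<le> strpoint b X" and "strpoint b X < 1"
proof -
  have "real (strval b X) < real b ^ length X"
    using strval_less[OF assms(2)] by (metis of_nat_less_iff of_nat_power)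
  then show "strpoint b X < 1" using assms(1) by (simp add: strpoint_def divide_less_eq)
qed (simp add: strpoint_def)

lemma strpoint_range_strs:
  "2 \<le> b \<Longrightarrow> X \<in> strs b d k \<Longrightarrow> 0 \<le> strpoint b X \<and> strpoint b X < 1"
  using strpoint_range[of b X] by (auto simp: strs_def)

lemma mu_eq_distr:
  "mu b d k = distr (density (count_space (strs b d k)) (\<lambda>X. ennreal (strweight b X))) borel (strpoint b)"
  (is "_ = ?N")
proof -
  have "?N = measure_of UNIV (sets borel) (emeasure ?N)"
    by (metis measure_of_of_measure space_distr sets_distr space_borel)
  also have "\<dots> = mu b d k"
    unfolding mu_def
  proof (rule measure_of_eq)
    fix A :: "real set" assume "A \<in> sigma_sets UNIV (sets borel)"
    then have A: "A \<in> sets borel" by (metis sets.sigma_sets_eq space_borel)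
    have "emeasure ?N A = (\<integral>\<^sup>+ X. ennreal (strweight b X) * indicator (strpoint b -` A \<inter> strs b d k) X
        \<partial>count_space (strs b d k))"
      by (simp add: emeasure_distr[OF _ A] emeasure_density)
    also have "\<dots> = (\<integral>\<^sup>+ X. ennreal (1 / real b ^ length X) *
        indicator A (real (strval b X) / real b ^ length X) \<partial>count_space (strs b d k))"
      by (rule nn_integral_cong) (auto simp: strweight_def strpoint_def indicator_def)
    finally show "emeasure ?N A = \<dots>" .
  qed simp
  finally show ?thesis by simp
qed

lemma moment_summand_bounds:
  assumes "2 \<le> b" and "X \<in> strs b d k"
  shows "0 < strweight b X * (1 - strpoint b X) ^ i"
    and "strweight b X * (1 - strpoint b X) ^ i \<le> strweight b X"
proof -
  have w: "0 < strweight b X" using assms(1) by (simp add: strweight_def)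
  have p: "0 \<le> strpoint b X" "strpoint b X < 1" using strpoint_range_strs[OF assms] by auto
  then show "0 < strweight b X * (1 - strpoint b X) ^ i" using w by simp
  have "(1 - strpoint b X) ^ i \<le> 1" using p by (intro power_le_one) auto
  then show "strweight b X * (1 - strpoint b X) ^ i \<le> strweight b X"
    using w by (simp add: mult_left_le)
qed

lemma moment_summable:
  assumes "2 \<le> b" and "d < b"
  shows "(\<lambda>X. strweight b X * (1 - strpoint b X) ^ i) summable_on strs b d k"
  using moment_summand_bounds[OF assms(1)]
  by (intro summable_on_comparison_test[OF strweight_summable[OF assms]]) (auto intro: less_imp_le)

lemma v_eq_infsum:
  assumes "2 \<le> b" and "d < b"
  shows "v b d k i = infsum (\<lambda>X. strweight b X * (1 - strpoint b X) ^ i) (strs b d k)"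
proof -
  let ?S = "strs b d k"
  let ?f = "\<lambda>X. strweight b X * (1 - strpoint b X) ^ i"
  have "v b d k i = integral\<^sup>L (density (count_space ?S) (\<lambda>X. ennreal (strweight b X)))
        (\<lambda>X. indicator {0..<1} (strpoint b X) *\<^sub>R (1 - strpoint b X) ^ i)"
    unfolding v_def set_lebesgue_integral_def mu_eq_distr by (rule integral_distr) auto
  also have "\<dots> = integral\<^sup>L (count_space ?S)
        (\<lambda>X. strweight b X *\<^sub>R (indicator {0..<1} (strpoint b X) *\<^sub>R (1 - strpoint b X) ^ i))"
    by (rule integral_density) (auto simp: strweight_def)
  also have "\<dots> = infsetsum ?f ?S"
    unfolding infsetsum_def
    by (rule Bochner_Integration.integral_cong) (auto simp: strpoint_range_strs[OF assms(1)])
  also have "\<dots> = infsum ?f ?S"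
  proof (rule infsetsum_infsum)
    have "(\<lambda>X. norm (?f X)) summable_on ?S \<longleftrightarrow> ?f summable_on ?S"
      by (rule summable_on_cong) (simp add: moment_summand_bounds(1)[OF assms(1)] less_imp_le)
    then have "(\<lambda>X. norm (?f X)) summable_on ?S" using moment_summable[OF assms] by simp
    then show "Infinite_Set_Sum.abs_summable_on ?f ?S" using abs_summable_equivalent by blast
  qed
  finally show ?thesis .
qed

lemma v_pos:
  assumes b: "2 \<le> b" and d: "d < b"
  shows "0 < v b d k i"
proof -
  let ?f = "\<lambda>X. strweight b X * (1 - strpoint b X) ^ i"
  have X0: "replicate k d \<in> strs b d k" using d by (simp add: strs_def)
  have "infsum ?f {replicate k d} \<le> infsum ?f (strs b d k)"
    using X0 moment_summand_bounds(1)[OF b]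
    by (intro infsum_mono_neutral moment_summable[OF b d]) (auto intro: less_imp_le)
  then show ?thesis
    using moment_summand_bounds(1)[OF b X0, of i] by (simp add: v_eq_infsum[OF b d])
qed

lemma v_le:
  assumes "2 \<le> b" and "d < b"
  shows "v b d k i \<le> real b"
proof -
  have "v b d k i \<le> infsum (strweight b) (strs b d k)"
    unfolding v_eq_infsum[OF assms] using moment_summand_bounds(2)[OF assms(1)]
    by (intro infsum_mono moment_summable strweight_summable assms)
  also have "\<dots> \<le> real b" by (rule infsum_strweight_le[OF assms])
  finally show ?thesis .
qed

lemma has_sum_reciprocal_powers:
  fixes x y :: real
  assumes "0 < x" and "0 \<le> y" and "y \<le> 1"
  shows "((\<lambda>i. (1 - y) ^ i / (x + 1) ^ (i + 1)) has_sum 1 / (x + y)) UNIV"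
proof -
  have "norm ((1 - y) / (x + 1)) < 1" using assms by simp
  then have "(\<lambda>i. 1 / (x + 1) * ((1 - y) / (x + 1)) ^ i) sums (1 / (x + 1) * (1 / (1 - (1 - y) / (x + 1))))"
    by (intro sums_mult geometric_sums)
  moreover have "1 / (x + 1) * (1 / (1 - (1 - y) / (x + 1))) = 1 / (x + y)"
    using assms by (simp add: field_simps)
  ultimately have "(\<lambda>i. (1 - y) ^ i / (x + 1) ^ (i + 1)) sums (1 / (x + y))"
    by (simp add: power_divide)
  then show ?thesis
    by (rule sums_nonneg_imp_has_sum) (use assms in simp)
qed

lemma has_sum_swap_nonneg:
  fixes f :: "'a \<Rightarrow> 'b \<Rightarrow> real"
  assumes nonneg: "\<And>x y. x \<in> A \<Longrightarrow> y \<in> B \<Longrightarrow> 0 \<le> f x y"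
    and rows: "\<And>x. x \<in> A \<Longrightarrow> (f x has_sum r x) B"
    and cols: "\<And>y. y \<in> B \<Longrightarrow> ((\<lambda>x. f x y) has_sum c y) A"
    and "r summable_on A"
  shows "(c has_sum infsum r A) B"
proof -
  let ?F = "\<lambda>(x, y). f x y"
  have "?F summable_on A \<times> B"
    using summable_on_SigmaI[where f = ?F and B = "\<lambda>_. B"] rows nonneg assms(4) by auto
  then have F: "(?F has_sum infsum ?F (A \<times> B)) (A \<times> B)" by simp
  then have "(r has_sum infsum ?F (A \<times> B)) A"
    by (rule has_sum_SigmaD) (use rows in simp)
  then have "infsum ?F (A \<times> B) = infsum r A" by (simp add: infsumI)
  moreover have "((\<lambda>(y, x). f x y) has_sum infsum ?F (A \<times> B)) (B \<times> A)"
    using F by (simp add: has_sum_swap[of ?F])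
  then have "(c has_sum infsum ?F (A \<times> B)) B"
    by (rule has_sum_SigmaD) (use cols in simp)
  ultimately show ?thesis by simp
qed

lemma reciprocal_append_digits:
  assumes "2 \<le> b"
  shows "1 / real (append_digits b n X) = strweight b X / (real n + strpoint b X)"
  using assms by (simp add: append_digits_def strweight_def strpoint_def field_simps)

lemma has_sum_reciprocals_moments:
  assumes b: "2 \<le> b" and d: "d < b" and n: "0 < n"
  shows "((\<lambda>X. 1 / real (append_digits b n X)) has_sum
           (\<Sum>i. v b d k i / (real n + 1) ^ (i + 1))) (strs b d k)"
proof -
  let ?S = "strs b d k"
  let ?f = "\<lambda>X i. strweight b X * (1 - strpoint b X) ^ i / (real n + 1) ^ (i + 1)"
  let ?r = "\<lambda>X. 1 / real (append_digits b n X)"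
  let ?c = "\<lambda>i. v b d k i / (real n + 1) ^ (i + 1)"
  have rows: "(?f X has_sum ?r X) UNIV" if "X \<in> ?S" for X
    using has_sum_cmult_right[OF has_sum_reciprocal_powers[of "real n" "strpoint b X"], of "strweight b X"]
      strpoint_range_strs[OF b that] n
    by (simp add: reciprocal_append_digits[OF b] mult.assoc)
  have cols: "((\<lambda>X. ?f X i) has_sum ?c i) ?S" for i
    using has_sum_divide_const[OF has_sum_infsum[OF moment_summable[OF b d]]]
    by (simp add: v_eq_infsum[OF b d])
  have "?r summable_on ?S"
  proof (rule summable_on_comparison_test[OF strweight_summable[OF b d]])
    fix X assume "X \<in> ?S"
    then have denom: "1 \<le> real n + strpoint b X" using strpoint_range_strs[OF b] n by force
    have "strweight b X / (real n + strpoint b X) \<le> strweight b X / 1"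
      using denom by (intro divide_left_mono) (auto simp: strweight_def)
    then show "?r X \<le> strweight b X" by (simp add: reciprocal_append_digits[OF b])
  qed simp
  moreover have "(?c has_sum infsum ?r ?S) UNIV"
    using has_sum_swap_nonneg[of ?S UNIV ?f ?r ?c] rows cols \<open>?r summable_on ?S\<close>
      moment_summand_bounds(1)[OF b] by (force intro: less_imp_le)
  then have "(\<Sum>i. ?c i) = infsum ?r ?S"
    by (simp add: has_sum_imp_sums sums_unique[symmetric])
  ultimately show ?thesis by simp
qed

theorem mainTheorem7:
  fixes b d k n :: nat
  assumes "b \<ge> 2" and "d < b" and "n > 0" and "kcount b d n \<le> k"
  shows "((\<lambda>m. 1 / real m) has_sum
            (\<Sum>m. v b d (k - kcount b d n) m / (real n + 1) ^ (m + 1)))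
          {m. m > 0 \<and> len b m \<ge> len b n \<and> ld b (len b n) m = n \<and> kcount b d m = k}
       \<and> (\<forall>m. v b d (k - kcount b d n) m / (real n + 1) ^ (m + 1) > 0)
       \<and> (\<exists>C r. 0 < r \<and> r < 1 \<and>
            (\<forall>m. v b d (k - kcount b d n) m / (real n + 1) ^ (m + 1) \<le> C * r ^ m))"
proof (intro conjI allI exI)
  note b = assms(1) and d = assms(2) and n = assms(3)
  let ?k = "k - kcount b d n"
  show "((\<lambda>m. 1 / real m) has_sum (\<Sum>i. v b d ?k i / (real n + 1) ^ (i + 1)))
      {m. m > 0 \<and> len b m \<ge> len b n \<and> ld b (len b n) m = n \<and> kcount b d m = k}"
    using has_sum_reindex_bij_betw[OF bij_betw_append_digits[OF b n assms(4)], of "\<lambda>m. 1 / real m"]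
      has_sum_reciprocals_moments[OF b d n, of ?k] by simp
  show "0 < v b d ?k i / (real n + 1) ^ (i + 1)" for i
    using v_pos[OF b d] by simp
  show "0 < 1 / (real n + 1)" and "1 / (real n + 1) < 1" using n by auto
  show "v b d ?k i / (real n + 1) ^ (i + 1) \<le> real b / (real n + 1) * (1 / (real n + 1)) ^ i" for i
    using v_le[OF b d] by (simp add: power_one_over divide_right_mono field_simps)
qed

end
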